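(* Let $K$ be a finite oriented simplicial complex, let $d \geq 0$, and let $n$ be the number of $d$-simplices of $K$. Let ${\bm{B}}_d$ and ${\bm{B}}_{d+1}$ be the boundary matrices of $K$ in degrees $d$ and $d+1$ (with ${\bm{B}}_0 = 0$ and ${\bm{B}}_{d+1}=0$ if $K$ has no $(d+1)$-simplices). Let $F, F', Z$ be positive integers and, for each head $z \in \{1,\dots,Z\}$, fix matrices ${\bm{W}}^{z}_1, {\bm{W}}^{z}_2 \in \mathbb{R}^{F' \times F}$, functions $a^{z}_1, a^{z}_2 : \mathbb{R}^{F'} \times \mathbb{R}^{F'} \to \mathbb{R}$ and a function $\phi^{z} : \mathbb{R}^{F'} \times \mathbb{R}^{F'} \to \mathbb{R}^{G}$. Assume that for every $z$ and $i\in\{1,2\}$, $a^z_i$ is even in each argument separately, i.e. $a^z_i(-u,v) = a^z_i(u,v) = a^z_i(u,-v)$ for all $u,v$, and that $\phi^z$ is odd, i.e. $\phi^z(-x,-y) = -\phi^z(x,y)$ for all $x,y$. Let $f$ be the SAT layer defined below, mapping a feature matrix ${\bm{H}} \in \mathbb{R}^{n\times F}$ (rows indexed by the $d$-simplices) together with $({\bm{B}}_d, {\bm{B}}_{d+1})$ to $f({\bm{H}}, {\bm{B}}_d, {\bm{B}}_{d+1}) \in \mathbb{R}^{n \times ZG}$. Then $f$ is orientation equivariant: for every diagonal matrix ${\bm{T}} \in \mathbb{R}^{n\times n}$ with diagonal entries in $\{\pm 1\}$, $$f({\bm{T}}{\bm{H}}, {\bm{B}}_d{\bm{T}}, {\bm{T}}{\bm{B}}_{d+1})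 = {\bm{T}}\, f({\bm{H}}, {\bm{B}}_d, {\bm{B}}_{d+1}).$$
   Context: Boundary matrices: for an oriented simplex $[v_0,\dots,v_k]$, $\partial_k [v_0,\dots,v_k] = \sum_{i=0}^k (-1)^i [v_0,\dots,\hat v_i,\dots,v_k]$, where two orderings of the vertices represent the same oriented simplex if they differ by an even permutation and the negative of each other if they differ by an odd permutation; ${\bm{B}}_k$ is the matrix of $\partial_k$ with rows indexed by the (chosen oriented) $(k-1)$-simplices and columns by the $k$-simplices. Multiplying ${\bm{B}}_d$ on the right by ${\bm{T}}$ and ${\bm{B}}_{d+1}$ on the left by ${\bm{T}}$ corresponds to reversing the orientation of those $d$-simplices whose diagonal entry in ${\bm{T}}$ is $-1$. Neighbourhoods (purely combinatorial, independent of orientations): for a $d$-simplex $\sigma$, ${\mathcal{N}}^{\uparrow}_\sigma$ is the set consisting of $\sigma$ together with all $d$-simplices $\tau \ne \sigma$ such that $\sigma$ and $\tau$ are both faces of a common $(d+1)$-simplex (upper adjacent); ${\mathcal{N}}^{\downarrow}_\sigma$ is the set consisting of $\sigma$ together with all $d$-simplices $\tau\neq\sigma$ sharing a common $(d-1)$-dimensional face with $\sigma$ (lower adjacent). Relative orientations: set $o^{\uparrow}_{\sigma,\sigma} = o^{\downarrow}_{\sigma,\sigma} = 1$; for $\tau \in {\mathcal{N}}^{\uparrow}_\sigma\setminus\{\sigma\}$ set $o^{\uparrow}_{\sigma,\tau} = ({\bm{B}}_{d+1}{\bm{B}}_{d+1}^\top)_{\sigma\tau} \in \{\pm1\}$,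 and for $\tau \in {\mathcal{N}}^{\downarrow}_\sigma\setminus\{\sigma\}$ set $o^{\downarrow}_{\sigma,\tau} = ({\bm{B}}_{d}^\top{\bm{B}}_{d})_{\sigma\tau} \in \{\pm1\}$ (two distinct $d$-simplices share at most one common coface and at most one common face, so these entries are $\pm1$). SAT layer: writing ${\bm{h}}_\sigma \in \mathbb{R}^F$ for the row of ${\bm{H}}$ indexed by $\sigma$, the attention coefficients of head $z$ are $$\alpha^{\uparrow,z}_{\sigma,\tau} = o^{\uparrow}_{\sigma,\tau}\cdot \frac{\exp\big(a^z_1({\bm{W}}^z_1{\bm{h}}_\sigma, {\bm{W}}^z_1{\bm{h}}_\tau)\big)}{\sum_{\rho\in{\mathcal{N}}^{\uparrow}_\sigma}\exp\big(a^z_1({\bm{W}}^z_1{\bm{h}}_\sigma, {\bm{W}}^z_1{\bm{h}}_\rho)\big)}, \quad \tau\in{\mathcal{N}}^{\uparrow}_\sigma,$$ $$\alpha^{\downarrow,z}_{\sigma,\tau} = o^{\downarrow}_{\sigma,\tau}\cdot \frac{\exp\big(a^z_2({\bm{W}}^z_2{\bm{h}}_\sigma, {\bm{W}}^z_2{\bm{h}}_\tau)\big)}{\sum_{\rho\in{\mathcal{N}}^{\downarrow}_\sigma}\exp\big(a^z_2({\bm{W}}^z_2{\bm{h}}_\sigma, {\bm{W}}^z_2{\bm{h}}_\rho)\big)}, \quad \tau\in{\mathcal{N}}^{\downarrow}_\sigma,$$ and the output row indexed by $\sigma$ is the concatenation over $z=1,\dots,Z$ of $$\phi^z\Big(\sum_{\tau\in{\mathcal{N}}^{\uparrow}_\sigma}\alpha^{\uparrow,z}_{\sigma,\tau}{\bm{W}}^z_1{\bm{h}}_\tau,\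 \sum_{\tau\in{\mathcal{N}}^{\downarrow}_\sigma}\alpha^{\downarrow,z}_{\sigma,\tau}{\bm{W}}^z_2{\bm{h}}_\tau\Big).$$ (When the orientations and boundary matrices change as in the claim, the coefficients $o$ are recomputed from the new boundary matrices.) *)

theory Defs
  imports "HOL-Analysis.Analysis" "HOL-Combinatorics.Permutations"
begin

definition abs_simplicial_complex :: "'v set set \<Rightarrow> bool" where
  "abs_simplicial_complex K \<longleftrightarrow> finite K \<and>
     (\<forall>\<sigma>\<in>K. finite \<sigma> \<and> \<sigma> \<noteq> {} \<and> (\<forall>\<tau>. \<tau> \<subseteq> \<sigma> \<and> \<tau> \<noteq> {} \<longrightarrow> \<tau> \<in> K))"

definition simplices :: "'v set set \<Rightarrow> nat \<Rightarrow> 'v set set" where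
  "simplices K k = {\<sigma>\<in>K. card \<sigma> = Suc k}"

text \<open>An orientation chooses for every simplex an ordering of its vertices
(the oriented simplex is the class of this ordering under even permutations).\<close>
definition orientation :: "'v set set \<Rightarrow> ('v set \<Rightarrow> 'v list) \<Rightarrow> bool" where
  "orientation K ori \<longleftrightarrow> (\<forall>\<sigma>\<in>K. distinct (ori \<sigma>) \<and> set (ori \<sigma>) = \<sigma>)"

text \<open>Sign of the permutation carrying the ordering ys to the ordering xs
(both distinct lists of the same elements): [xs] = list_sign xs ys * [ys].\<close>
definition list_sign :: "'v list \<Rightarrow> 'v list \<Rightarrow> real" where
  "list_sign xs ys = of_int (sign (THE p. p permutes {..<length xs} \<and>
       (\<forall>i<length xs. xs ! i = ys ! p i)))"

definition remove_nth :: "nat \<Rightarrow> 'a list \<Rightarrow> 'a list" where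
  "remove_nth i xs = take i xs @ drop (Suc i) xs"

text \<open>Boundary matrix B_k of the oriented complex, as a function
(row (k-1)-simplex tau, column k-simplex sigma). Rows are the simplices with k vertices;
for k = 0 there are none (B_0 = 0).\<close>
definition boundary_matrix :: "'v set set \<Rightarrow> ('v set \<Rightarrow> 'v list) \<Rightarrow> nat \<Rightarrow> 'v set \<Rightarrow> 'v set \<Rightarrow> real" where
  "boundary_matrix K ori k \<tau> \<sigma> =
     (if \<sigma> \<in> simplices K k \<and> \<tau> \<in> K \<and> card \<tau> = k \<and> \<tau> \<subseteq> \<sigma> then
        (let xs = ori \<sigma>; i = (THE i. i < length xs \<and> xs ! i \<notin> \<tau>) in
           (-1) ^ i * list_sign (remove_nth i xs) (ori \<tau>))
      else 0)"

definition up_nbhd :: "'v set set \<Rightarrow> nat \<Rightarrow> 'v set \<Rightarrow> 'v set set" where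
  "up_nbhd K d \<sigma> = insert \<sigma> {\<tau>\<in>simplices K d. \<tau> \<noteq> \<sigma> \<and>
       (\<exists>\<rho>\<in>simplices K (Suc d). \<sigma> \<subseteq> \<rho> \<and> \<tau> \<subseteq> \<rho>)}"

definition down_nbhd :: "'v set set \<Rightarrow> nat \<Rightarrow> 'v set \<Rightarrow> 'v set set" where
  "down_nbhd K d \<sigma> = insert \<sigma> {\<tau>\<in>simplices K d. \<tau> \<noteq> \<sigma> \<and>
       (\<exists>\<rho>\<in>K. card \<rho> = d \<and> \<rho> \<subseteq> \<sigma> \<and> \<rho> \<subseteq> \<tau>)}"

definition o_up :: "'v set set \<Rightarrow> nat \<Rightarrow> ('v set \<Rightarrow> 'v set \<Rightarrow> real) \<Rightarrow> 'v set \<Rightarrow> 'v set \<Rightarrow> real" where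
  "o_up K d B1 \<sigma> \<tau> = (if \<tau> = \<sigma> then 1 else (\<Sum>\<rho>\<in>simplices K (Suc d). B1 \<sigma> \<rho> * B1 \<tau> \<rho>))"

definition o_down :: "'v set set \<Rightarrow> nat \<Rightarrow> ('v set \<Rightarrow> 'v set \<Rightarrow> real) \<Rightarrow> 'v set \<Rightarrow> 'v set \<Rightarrow> real" where
  "o_down K d B \<sigma> \<tau> = (if \<tau> = \<sigma> then 1 else (\<Sum>\<rho>\<in>{\<rho>\<in>K. card \<rho> = d}. B \<rho> \<sigma> * B \<rho> \<tau>))"

definition attn :: "('v set \<Rightarrow> 'v set \<Rightarrow> real) \<Rightarrow> 'v set set \<Rightarrow> real^'f^'fp \<Rightarrow>
    (real^'fp \<Rightarrow> real^'fp \<Rightarrow> real) \<Rightarrow> ('v set \<Rightarrow> real^'f) \<Rightarrow> 'v set \<Rightarrow> 'v set \<Rightarrow> real" where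
  "attn ori_rel N W a H \<sigma> \<tau> = ori_rel \<sigma> \<tau> * (exp (a (W *v H \<sigma>) (W *v H \<tau>)) /
       (\<Sum>\<rho>\<in>N. exp (a (W *v H \<sigma>) (W *v H \<rho>))))"

text \<open>The SAT layer: the row indexed by sigma is the concatenation over heads z
(represented as a vector indexed by 'z of vectors in R^G).\<close>
definition sat_layer :: "'v set set \<Rightarrow> nat \<Rightarrow> ('z \<Rightarrow> real^'f^'fp) \<Rightarrow> ('z \<Rightarrow> real^'f^'fp) \<Rightarrow>
    ('z \<Rightarrow> real^'fp \<Rightarrow> real^'fp \<Rightarrow> real) \<Rightarrow> ('z \<Rightarrow> real^'fp \<Rightarrow> real^'fp \<Rightarrow> real) \<Rightarrow>
    ('z \<Rightarrow> real^'fp \<Rightarrow> real^'fp \<Rightarrow> real^'g) \<Rightarrow>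
    ('v set \<Rightarrow> real^'f) \<Rightarrow> ('v set \<Rightarrow> 'v set \<Rightarrow> real) \<Rightarrow> ('v set \<Rightarrow> 'v set \<Rightarrow> real) \<Rightarrow>
    'v set \<Rightarrow> real^'g^'z" where
  "sat_layer K d W1 W2 a1 a2 phi H Bd Bd1 \<sigma> =
     (\<chi> z. phi z
        (\<Sum>\<tau>\<in>up_nbhd K d \<sigma>. attn (o_up K d Bd1) (up_nbhd K d \<sigma>) (W1 z) (a1 z) H \<sigma> \<tau> *\<^sub>R (W1 z *v H \<tau>))
        (\<Sum>\<tau>\<in>down_nbhd K d \<sigma>. attn (o_down K d Bd) (down_nbhd K d \<sigma>) (W2 z) (a2 z) H \<sigma> \<tau> *\<^sub>R (W2 z *v H \<tau>)))"

end

theory Submission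
  imports Defs
begin

text \<open>Reorienting by \<open>T\<close> multiplies the features of \<open>\<tau>\<close> and both relative
orientations \<open>o\<^sub>\<sigma>\<^sub>\<tau>\<close> by signs, \<open>t \<sigma> t \<tau>\<close> in the latter case. The scores \<open>a\<close> are even
in each argument, so the softmax weights do not change; in each message
\<open>\<alpha>\<^sub>\<sigma>\<^sub>\<tau> W h\<^sub>\<tau>\<close> the sign \<open>t \<tau>\<close> then cancels and only \<open>t \<sigma>\<close> survives. Oddness of
\<open>\<phi>\<close> moves this common sign outside. Nothing about boundary matrices is used
beyond the shape of \<open>o_up\<close> and \<open>o_down\<close>.\<close>

lemma sign_mult_self: "c = 1 \<or> c = -1 \<Longrightarrow> c * c = (1::real)"
  by auto

lemma even_fun_scaleR_sign:
  assumes "\<And>u v. a (- u) v = a u v \<and> a u (- v) = a u v"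
    and "c = 1 \<or> c = -1" and "e = 1 \<or> e = -1"
  shows "a (c *\<^sub>R (u::'a::real_vector)) (e *\<^sub>R (v::'b::real_vector)) = a u v"
  using assms(2,3) by (elim disjE) (simp_all add: assms(1))

lemma odd_fun_scaleR_sign:
  assumes "\<And>x y. f (- x) (- y) = - f x y" and "c = 1 \<or> c = -1"
  shows "f (c *\<^sub>R (x::'a::real_vector)) (c *\<^sub>R (y::'b::real_vector)) = c *\<^sub>R (f x y :: 'c::real_vector)"
  using assms(2) by (elim disjE) (simp_all add: assms(1)[of x y, symmetric])

lemma o_up_rescale:
  assumes "t \<sigma> * t \<sigma> = 1"
  shows "o_up K d (\<lambda>\<tau> \<rho>. t \<tau> * B \<tau> \<rho>) \<sigma> \<tau> = t \<sigma> * t \<tau> * o_up K d B \<sigma> \<tau>"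
  using assms by (auto simp: o_up_def sum_distrib_left algebra_simps intro!: sum.cong)

lemma o_down_rescale:
  assumes "t \<sigma> * t \<sigma> = 1"
  shows "o_down K d (\<lambda>\<rho> \<tau>. B \<rho> \<tau> * t \<tau>) \<sigma> \<tau> = t \<sigma> * t \<tau> * o_down K d B \<sigma> \<tau>"
  using assms by (auto simp: o_down_def sum_distrib_left algebra_simps intro!: sum.cong)

lemma up_nbhd_subset: "\<sigma> \<in> simplices K d \<Longrightarrow> up_nbhd K d \<sigma> \<subseteq> simplices K d"
  by (auto simp: up_nbhd_def)

lemma down_nbhd_subset: "\<sigma> \<in> simplices K d \<Longrightarrow> down_nbhd K d \<sigma> \<subseteq> simplices K d"
  by (auto simp: down_nbhd_def)

lemma self_mem_up_nbhd: "\<sigma> \<in> up_nbhd K d \<sigma>"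
  and self_mem_down_nbhd: "\<sigma> \<in> down_nbhd K d \<sigma>"
  by (auto simp: up_nbhd_def down_nbhd_def)

lemma attn_rescale:
  fixes W :: "real^'f::finite^'fp::finite"
  assumes even: "\<And>u v. a (- u) v = a u v \<and> a u (- v) = a u v"
    and sign: "\<And>\<rho>. \<rho> \<in> N \<Longrightarrow> t \<rho> = 1 \<or> t \<rho> = -1"
    and "\<sigma> \<in> N" and "\<tau> \<in> N"
    and rel: "rel' \<sigma> \<tau> = t \<sigma> * t \<tau> * rel \<sigma> \<tau>"
  shows "attn rel' N W a (\<lambda>\<rho>. t \<rho> *\<^sub>R H \<rho>) \<sigma> \<tau> = t \<sigma> * t \<tau> * attn rel N W a H \<sigma> \<tau>"
proof -
  have score: "a (W *v (t \<sigma> *\<^sub>R H \<sigma>)) (W *v (t \<rho> *\<^sub>R H \<rho>)) = a (W *v H \<sigma>) (W *v H \<rho>)"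
    if "\<rho> \<in> N" for \<rho>
    unfolding linear_scale[OF matrix_vector_mul_linear]
    using even_fun_scaleR_sign[where a=a, OF even] sign \<open>\<sigma> \<in> N\<close> that by blast
  have "(\<Sum>\<rho>\<in>N. exp (a (W *v (t \<sigma> *\<^sub>R H \<sigma>)) (W *v (t \<rho> *\<^sub>R H \<rho>))))
      = (\<Sum>\<rho>\<in>N. exp (a (W *v H \<sigma>) (W *v H \<rho>)))"
    by (rule sum.cong) (simp_all add: score)
  then show ?thesis
    by (simp add: attn_def score[OF \<open>\<tau> \<in> N\<close>] rel)
qed

lemma attn_message_sum_rescale:
  fixes W :: "real^'f::finite^'fp::finite"
  assumes even: "\<And>u v. a (- u) v = a u v \<and> a u (- v) = a u v"
    and sign: "\<And>\<rho>. \<rho> \<in> N \<Longrightarrow> t \<rho> = 1 \<or> t \<rho> = -1"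
    and "\<sigma> \<in> N"
    and rel: "\<And>\<tau>. rel' \<sigma> \<tau> = t \<sigma> * t \<tau> * rel \<sigma> \<tau>"
  shows "(\<Sum>\<tau>\<in>N. attn rel' N W a (\<lambda>\<rho>. t \<rho> *\<^sub>R H \<rho>) \<sigma> \<tau> *\<^sub>R (W *v (t \<tau> *\<^sub>R H \<tau>)))
       = t \<sigma> *\<^sub>R (\<Sum>\<tau>\<in>N. attn rel N W a H \<sigma> \<tau> *\<^sub>R (W *v H \<tau>))"
  unfolding scaleR_sum_right
proof (rule sum.cong[OF refl])
  fix \<tau> assume "\<tau> \<in> N"
  have "t \<tau> * t \<tau> = 1"
    using sign[OF \<open>\<tau> \<in> N\<close>] by (rule sign_mult_self)
  then show "attn rel' N W a (\<lambda>\<rho>. t \<rho> *\<^sub>R H \<rho>) \<sigma> \<tau> *\<^sub>R (W *v (t \<tau> *\<^sub>R H \<tau>))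
      = t \<sigma> *\<^sub>R (attn rel N W a H \<sigma> \<tau> *\<^sub>R (W *v H \<tau>))"
    by (simp add: attn_rescale[where a=a and t=t and N=N and rel=rel and rel'=rel', OF even sign \<open>\<sigma> \<in> N\<close> \<open>\<tau> \<in> N\<close> rel]
        linear_scale[OF matrix_vector_mul_linear] mult.commute mult.left_commute)
qed

theorem proposition1:
  fixes K :: "'v set set" and ori :: "'v set \<Rightarrow> 'v list" and d :: nat
    and W1 W2 :: "'z::finite \<Rightarrow> real^'f::finite^'fp::finite"
    and a1 a2 :: "'z \<Rightarrow> real^'fp \<Rightarrow> real^'fp \<Rightarrow> real"
    and phi :: "'z \<Rightarrow> real^'fp \<Rightarrow> real^'fp \<Rightarrow> real^'g::finite"
    and H :: "'v set \<Rightarrow> real^'f" and t :: "'v set \<Rightarrow> real"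
    and Bd Bd1 :: "'v set \<Rightarrow> 'v set \<Rightarrow> real"
  assumes "abs_simplicial_complex K" and "orientation K ori"
    and "Bd = boundary_matrix K ori d" and "Bd1 = boundary_matrix K ori (Suc d)"
    and "\<And>z u v. a1 z (- u) v = a1 z u v \<and> a1 z u (- v) = a1 z u v"
    and "\<And>z u v. a2 z (- u) v = a2 z u v \<and> a2 z u (- v) = a2 z u v"
    and "\<And>z x y. phi z (- x) (- y) = - phi z x y"
    and "\<And>\<sigma>. \<sigma> \<in> simplices K d \<Longrightarrow> t \<sigma> = 1 \<or> t \<sigma> = -1"
  shows "\<forall>\<sigma>\<in>simplices K d.
     sat_layer K d W1 W2 a1 a2 phi (\<lambda>\<tau>. t \<tau> *\<^sub>R H \<tau>) (\<lambda>\<rho> \<tau>. Bd \<rho> \<tau> * t \<tau>) (\<lambda>\<tau> \<rho>. t \<tau> * Bd1 \<tau> \<rho>) \<sigma>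
     = t \<sigma> *\<^sub>R sat_layer K d W1 W2 a1 a2 phi H Bd Bd1 \<sigma>"
proof
  fix \<sigma> assume \<sigma>: "\<sigma> \<in> simplices K d"
  have t\<sigma>: "t \<sigma> * t \<sigma> = 1"
    using assms(8)[OF \<sigma>] by (rule sign_mult_self)
  have sign_up: "t \<rho> = 1 \<or> t \<rho> = -1" if "\<rho> \<in> up_nbhd K d \<sigma>" for \<rho>
    using assms(8) up_nbhd_subset[OF \<sigma>] that by blast
  have sign_down: "t \<rho> = 1 \<or> t \<rho> = -1" if "\<rho> \<in> down_nbhd K d \<sigma>" for \<rho>
    using assms(8) down_nbhd_subset[OF \<sigma>] that by blast
  have up: "(\<Sum>\<tau>\<in>up_nbhd K d \<sigma>. attn (o_up K d (\<lambda>\<tau> \<rho>. t \<tau> * Bd1 \<tau> \<rho>)) (up_nbhd K d \<sigma>)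
        (W1 z) (a1 z) (\<lambda>\<rho>. t \<rho> *\<^sub>R H \<rho>) \<sigma> \<tau> *\<^sub>R (W1 z *v (t \<tau> *\<^sub>R H \<tau>)))
      = t \<sigma> *\<^sub>R (\<Sum>\<tau>\<in>up_nbhd K d \<sigma>. attn (o_up K d Bd1) (up_nbhd K d \<sigma>) (W1 z) (a1 z) H \<sigma> \<tau>
        *\<^sub>R (W1 z *v H \<tau>))" for z
    by (rule attn_message_sum_rescale)
      (simp_all add: assms(5) sign_up self_mem_up_nbhd o_up_rescale[where t=t, OF t\<sigma>])
  have down: "(\<Sum>\<tau>\<in>down_nbhd K d \<sigma>. attn (o_down K d (\<lambda>\<rho> \<tau>. Bd \<rho> \<tau> * t \<tau>)) (down_nbhd K d \<sigma>)
        (W2 z) (a2 z) (\<lambda>\<rho>. t \<rho> *\<^sub>R H \<rho>) \<sigma> \<tau> *\<^sub>R (W2 z *v (t \<tau> *\<^sub>R H \<tau>)))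
      = t \<sigma> *\<^sub>R (\<Sum>\<tau>\<in>down_nbhd K d \<sigma>. attn (o_down K d Bd) (down_nbhd K d \<sigma>) (W2 z) (a2 z) H \<sigma> \<tau>
        *\<^sub>R (W2 z *v H \<tau>))" for z
    by (rule attn_message_sum_rescale)
      (simp_all add: assms(6) sign_down self_mem_down_nbhd o_down_rescale[where t=t, OF t\<sigma>])
  show "sat_layer K d W1 W2 a1 a2 phi (\<lambda>\<tau>. t \<tau> *\<^sub>R H \<tau>) (\<lambda>\<rho> \<tau>. Bd \<rho> \<tau> * t \<tau>)
      (\<lambda>\<tau> \<rho>. t \<tau> * Bd1 \<tau> \<rho>) \<sigma> = t \<sigma> *\<^sub>R sat_layer K d W1 W2 a1 a2 phi H Bd Bd1 \<sigma>"
    unfolding sat_layer_def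
    by (simp add: vec_eq_iff up down odd_fun_scaleR_sign[where f="phi z" for z, OF assms(7) assms(8)[OF \<sigma>]])
qed

end
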